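(* For all $n\in\mathbb N$ the following hold in $\mathbb V$: $$\sum_{k=0}^n G_{n-k}\star W_{-k}\,q^{2k-n}=\sum_{k=0}^n W_{-k}\star G_{n-k}\,q^{n-2k}=[2]_q^n(xy+yx)^nx,$$ $$\sum_{k=0}^n G_{n-k}\star W_{k+1}\,q^{n-2k}=\sum_{k=0}^n W_{k+1}\star G_{n-k}\,q^{2k-n}=[2]_q^n\,y(xy+yx)^n,$$ $$\sum_{k=0}^n \tilde G_{n-k}\star W_{-k}\,q^{n-2k}=\sum_{k=0}^n W_{-k}\star\tilde G_{n-k}\,q^{2k-n}=[2]_q^n\,x(xy+yx)^n,$$ $$\sum_{k=0}^n \tilde G_{n-k}\star W_{k+1}\,q^{2k-n}=\sum_{k=0}^n W_{k+1}\star\tilde G_{n-k}\,q^{n-2k}=[2]_q^n(xy+yx)^ny.$$ On the right-hand sides, powers and products are taken in the free (concatenation) product.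
   Context: Let $\mathbb F$ be a field and let $q\in\mathbb F$ be nonzero and not a root of unity. Let $[m]_q=(q^m-q^{-m})/(q-q^{-1})$. Let $\mathbb V$ be the free associative $\mathbb F$-algebra on noncommuting $x,y$, with basis the words (including $1$). Juxtaposition denotes concatenation. Set $\langle x,x\rangle=\langle y,y\rangle=2$ and $\langle x,y\rangle=\langle y,x\rangle=-2$. The $q$-shuffle product $\star$ is the bilinear product determined as follows: - $1\star v=v\star 1=v$; - for nontrivial words $u=u_1\cdots u_r$ and $v=v_1\cdots v_s$, $$u\star v=u_1((u_2\cdots u_r)\star v)+v_1(u\star(v_2\cdots v_s))q^{\langle u_1,v_1\rangle+\cdots+\langle u_r,v_1\rangle}.$$ This makes $\mathbb V$ an associative algebra, the $q$-shuffle algebra. For $k\in\mathbb N$: - $W_{-k}=xyx\cdots x$ is the alternating word of length $2k+1$ beginning and ending with $x$; - $W_{k+1}=yxy\cdots y$ is the alternating word of length $2k+1$ beginning and ending with $y$; - $G_k=yxyx\cdots yx$ is the word of length $2k$; - $\tilde G_k=xyxy\cdots xy$ is the word of length $2k$; - $G_0=\tilde G_0=1$. *)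

theory Defs
  imports Main
begin

text \<open>An element of V is represented by its
coefficient function on words (letter list \<Rightarrow> 'a). All elements occurring below have
finite support, and all operations are defined by finite sums per coefficient.\<close>

datatype letter = X | Y

type_synonym 'a vec = "letter list \<Rightarrow> 'a"

definition ip :: "letter \<Rightarrow> letter \<Rightarrow> int" where
  "ip a b = (if a = b then 2 else -2)"

definition word :: "letter list \<Rightarrow> 'a::field vec" where
  "word v = (\<lambda>w. if w = v then 1 else 0)"

definition vadd :: "'a::field vec \<Rightarrow> 'a vec \<Rightarrow> 'a vec" where
  "vadd f g = (\<lambda>w. f w + g w)"

definition smul :: "'a::field \<Rightarrow> 'a vec \<Rightarrow> 'a vec" where
  "smul c f = (\<lambda>w. c * f w)"

definition prepend :: "letter \<Rightarrow> 'a::field vec \<Rightarrow> 'a vec" where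
  "prepend a f = (\<lambda>w. case w of [] \<Rightarrow> 0 | c # w' \<Rightarrow> (if c = a then f w' else 0))"

fun wstar :: "'a::field \<Rightarrow> letter list \<Rightarrow> letter list \<Rightarrow> 'a vec" where
  "wstar q [] v = word v"
| "wstar q (a # u) [] = word (a # u)"
| "wstar q (a # u) (b # v) =
     vadd (prepend a (wstar q u (b # v)))
          (smul (q powi (\<Sum>c\<leftarrow>a # u. ip c b)) (prepend b (wstar q (a # u) v)))"

text \<open>bilinear extension; only pairs with |a|+|b|=|w| contribute to the coefficient of w\<close>
definition star :: "'a::field \<Rightarrow> 'a vec \<Rightarrow> 'a vec \<Rightarrow> 'a vec" where
  "star q f g = (\<lambda>w. \<Sum>i\<le>length w.
      \<Sum>a\<in>{a. length a = i}. \<Sum>b\<in>{b. length b = length w - i}.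
        f a * g b * wstar q a b w)"

definition cmul :: "'a::field vec \<Rightarrow> 'a vec \<Rightarrow> 'a vec" where
  "cmul f g = (\<lambda>w. \<Sum>i\<le>length w. f (take i w) * g (drop i w))"

primrec cpow :: "'a::field vec \<Rightarrow> nat \<Rightarrow> 'a vec" where
  "cpow f 0 = word []"
| "cpow f (Suc n) = cmul f (cpow f n)"

definition other :: "letter \<Rightarrow> letter" where
  "other a = (if a = X then Y else X)"

primrec alt :: "letter \<Rightarrow> nat \<Rightarrow> letter list" where
  "alt a 0 = []"
| "alt a (Suc m) = a # alt (other a) m"

definition Wneg :: "nat \<Rightarrow> letter list" where "Wneg k = alt X (2*k+1)"   (* W_{-k} *)
definition Wpos :: "nat \<Rightarrow> letter list" where "Wpos k = alt Y (2*k+1)"   (* W_{k+1} *)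
definition G :: "nat \<Rightarrow> letter list" where "G k = alt Y (2*k)"
definition Gt :: "nat \<Rightarrow> letter list" where "Gt k = alt X (2*k)"

definition qint :: "'a::field \<Rightarrow> nat \<Rightarrow> 'a" where
  "qint q m = (q ^ m - inverse q ^ m) / (q - inverse q)"

definition xyyx :: "'a::field vec" where
  "xyyx = vadd (word [X, Y]) (word [Y, X])"

end

theory Submission
  imports Defs
begin

text \<open>
  Coefficients are compared letter by letter. The coefficient of \<open>c w\<close> in \<open>u \<star> v\<close> is
  that of \<open>w\<close> in \<open>u' \<star> v\<close> if \<open>u = c u'\<close>, plus \<open>q\<^bsup>\<langle>u,c\<rangle>\<^esub>\<close> times that of \<open>w\<close> in
  \<open>u \<star> v'\<close> if \<open>v = c v'\<close>. Stripping the first letter of an alternating word leaves an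
  alternating word, so the sums of the theorem, written as sums of \<open>p\<^bsup>j-i\<^esub> f\<^sub>i \<star> g\<^sub>j\<close>
  over \<open>i + j = n\<close>, together with a few companion sums of the same shape, satisfy a closed
  linear system of first-letter recursions. The right-hand sides satisfy the same system:
  stripping the first letter of \<open>(xy+yx)\<^sup>n\<close> leaves the other letter times
  \<open>(xy+yx)\<^bsup>n-1\<^esub>\<close>, and the two pieces of each recursion recombine with the factor
  \<open>q + q\<^sup>-\<^sup>1 = [2]\<^sub>q\<close>. Since the system
  is stated for an arbitrary starting letter, the \<open>x\<close>/\<open>y\<close> variants come out of one argument.
\<close>

lemma other_simps [simp]: "other X = Y" "other Y = X" "other (other a) = a"
  by (cases a; simp add: other_def)+

lemma other_neq [simp]: "other a \<noteq> a" "a \<noteq> other a"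
  by (cases a; simp)+

lemma letter_eq_or_other: "c = a \<or> c = other a"
  by (cases a; cases c) simp_all

lemma ip_simps [simp]: "ip a a = 2" "ip a (other a) = -2" "ip (other a) a = -2"
  by (simp_all add: ip_def)

definition ip_word :: "letter list \<Rightarrow> letter \<Rightarrow> int" where
  "ip_word u b = (\<Sum>c\<leftarrow>u. ip c b)"

lemma ip_word_Nil [simp]: "ip_word [] b = 0"
  and ip_word_Cons [simp]: "ip_word (c # u) b = ip c b + ip_word u b"
  by (simp_all add: ip_word_def)

lemma ip_word_alt: "ip_word (alt a m) b = (if even m then 0 else ip a b)"
proof (induction m arbitrary: a)
  case (Suc m)
  have "ip (other a) b = - ip a b"
    by (cases a; cases b) (simp_all add: ip_def)
  with Suc show ?case
    by simp
qed simp

definition alt_even :: "letter \<Rightarrow> nat \<Rightarrow> letter list" where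
  "alt_even a k = alt a (2 * k)"

definition alt_odd :: "letter \<Rightarrow> nat \<Rightarrow> letter list" where
  "alt_odd a k = alt a (2 * k + 1)"

lemma G_Gt_Wneg_Wpos_eq_alt: "G = alt_even Y" "Gt = alt_even X" "Wneg = alt_odd X" "Wpos = alt_odd Y"
  by (simp_all add: fun_eq_iff G_def Gt_def Wneg_def Wpos_def alt_even_def alt_odd_def)

lemma alt_odd_eq_Cons: "alt_odd a k = a # alt_even (other a) k"
  by (simp add: alt_odd_def alt_even_def)

lemma alt_odd_0 [simp]: "alt_odd a 0 = [a]"
  by (simp add: alt_odd_def)

lemma alt_even_0 [simp]: "alt_even a 0 = []"
  and alt_even_Suc [simp]: "alt_even a (Suc k) = a # alt_odd (other a) k"
  by (simp_all add: alt_even_def alt_odd_def)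

lemma alt_odd_neq_Nil [simp]: "alt_odd a k \<noteq> []"
  by (simp add: alt_odd_eq_Cons)

lemma ip_word_alt_even [simp]: "ip_word (alt_even a k) b = 0"
  by (simp only: alt_even_def ip_word_alt) simp

lemma prepend_Nil [simp]: "prepend a f [] = 0"
  and prepend_Cons [simp]: "prepend a f (b # w) = (if b = a then f w else 0)"
  by (simp_all add: prepend_def)

lemma prepend_alt_even [simp]: "c \<noteq> b \<Longrightarrow> prepend c h (alt_even b k) = 0"
  by (cases k) simp_all

lemma word_Cons_eq_prepend: "word (a # v) = prepend a (word v)"
  by (auto simp: word_def prepend_def fun_eq_iff split: list.split)

lemma word_Nil_Nil [simp]: "word [] [] = 1"
  and word_Nil_Cons [simp]: "word [] (b # w) = 0"
  and word_Cons_Nil [simp]: "word (a # v) [] = 0"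
  and word_Cons_Cons [simp]: "word (a # v) (b # w) = (if b = a then word v w else 0)"
  by (simp_all add: word_def)

declare wstar.simps [simp del]

lemma wstar_Nil_left [simp]: "wstar q [] v = word v"
  by (simp add: wstar.simps)

lemma wstar_Nil_right [simp]: "wstar q u [] = word u"
  by (cases u) (simp_all add: wstar.simps)

lemma wstar_Nil_Nil: "wstar q u v [] = (if u = [] \<and> v = [] then 1 else 0)"
  by (cases "(q, u, v)" rule: wstar.cases) (simp_all add: wstar.simps word_def vadd_def smul_def)

text \<open>Here \<open>prepend c h u\<close> is read as a coefficient: it is \<open>h u'\<close> if \<open>u = c # u'\<close> and \<open>0\<close> otherwise.\<close>

lemma wstar_Cons:
  "wstar q u v (c # w) =
     prepend c (\<lambda>u'. wstar q u' v w) u + q powi ip_word u c * prepend c (\<lambda>v'. wstar q u v' w) v"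
  by (cases "(q, u, v)" rule: wstar.cases)
     (auto simp: wstar.simps word_def vadd_def smul_def prepend_def ip_word_def split: list.split)

lemma wstar_eq_0_if_length_neq: "length w \<noteq> length u + length v \<Longrightarrow> wstar q u v w = 0"
proof (induction w arbitrary: u v)
  case Nil
  then show ?case
    by (simp add: wstar_Nil_Nil)
next
  case (Cons c w)
  then show ?case
    by (auto simp: wstar_Cons prepend_def word_def split: list.split)
qed

lemma finite_words_of_length: "finite {u :: letter list. length u = n}"
proof -
  have "(UNIV :: letter set) = {X, Y}"
    using letter.exhaust by auto
  then have "finite (UNIV :: letter set)"
    by (metis finite.emptyI finite_insert)
  then show ?thesis
    using finite_lists_length_eq[of "UNIV :: letter set" n] by simp
qed

lemma sum_word_mult:
  assumes "finite A"
  shows "(\<Sum>a\<in>A. word u a * h a) = (if u \<in> A then h u else 0)"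
proof -
  have "(\<Sum>a\<in>A. word u a * h a) = (\<Sum>a\<in>A. if a = u then h a else 0)"
    by (rule sum.cong) (simp_all add: word_def)
  with assms show ?thesis
    by simp
qed

lemma star_word: "star q (word u) (word v) = wstar q u v"
proof
  fix w
  have "star q (word u) (word v) w
      = (\<Sum>i\<le>length w. if i = length u \<and> length w - i = length v then wstar q u v w else 0)"
    unfolding star_def
    by (intro sum.cong refl)
       (simp add: mult.assoc sum_distrib_left[symmetric] sum_word_mult finite_words_of_length)
  also have "\<dots> = (\<Sum>i\<le>length w. if i = length u then wstar q u v w else 0)"
    by (rule sum.cong) (auto simp: wstar_eq_0_if_length_neq)
  also have "\<dots> = wstar q u v w"
    by (auto simp: wstar_eq_0_if_length_neq)
  finally show "star q (word u) (word v) w = wstar q u v w" .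
qed

lemma cmul_Nil: "cmul f g [] = f [] * g []"
  by (simp add: cmul_def)

lemma cmul_Cons: "cmul f g (c # w) = f [] * g (c # w) + cmul (\<lambda>u. f (c # u)) g w"
  unfolding cmul_def by (simp add: sum.atMost_Suc_shift del: sum.atMost_Suc)

lemma cmul_zero_left [simp]: "cmul (\<lambda>_. 0) g = (\<lambda>_. 0)"
  by (simp add: cmul_def fun_eq_iff)

lemma cmul_word_Nil_left [simp]: "cmul (word []) g = g"
proof
  fix w
  show "cmul (word []) g w = g w"
    by (cases w) (simp_all add: cmul_Nil cmul_Cons)
qed

lemma cmul_prepend_left: "cmul (prepend a f) g = prepend a (cmul f g)"
proof
  fix w
  show "cmul (prepend a f) g w = prepend a (cmul f g) w"
  proof (cases w)
    case (Cons c w')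
    then show ?thesis
      by (cases "c = a") (simp_all add: cmul_Cons)
  qed (simp add: cmul_Nil)
qed

lemma cmul_word_single: "cmul (word [a]) g = prepend a g"
  by (simp add: word_Cons_eq_prepend cmul_prepend_left)

lemma cmul_vadd_left: "cmul (vadd f g) h = vadd (cmul f h) (cmul g h)"
  by (simp add: cmul_def vadd_def distrib_right sum.distrib)

lemma cmul_xyyx: "cmul xyyx g = vadd (prepend X (prepend Y g)) (prepend Y (prepend X g))"
  by (simp add: xyyx_def word_Cons_eq_prepend cmul_vadd_left cmul_prepend_left)

lemma cmul_xyyx_Nil [simp]: "cmul xyyx g [] = 0"
  and cmul_xyyx_Cons [simp]: "cmul xyyx g (c # w) = prepend (other c) g w"
  by (cases c; simp add: cmul_xyyx vadd_def)+

lemma cmul_cpow_xyyx_Suc: "cmul (cpow xyyx (Suc n)) h = cmul xyyx (cmul (cpow xyyx n) h)"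
  by (simp add: cmul_xyyx cmul_vadd_left cmul_prepend_left)

lemma cpow_xyyx_Nil [simp]: "cpow xyyx n [] = (if n = 0 then 1 else 0)"
  by (cases n) simp_all

lemma cpow_xyyx_Suc_Cons [simp]: "cpow xyyx (Suc n) (c # w) = prepend (other c) (cpow xyyx n) w"
  by simp

declare cpow.simps(2) [simp del]

lemma cmul_cpow_xyyx_Nil [simp]: "cmul (cpow xyyx n) h [] = (if n = 0 then h [] else 0)"
  by (simp add: cmul_Nil)

lemma cmul_cpow_xyyx_Suc_Cons [simp]:
  "cmul (cpow xyyx (Suc n)) h (c # w) = prepend (other c) (cmul (cpow xyyx n) h) w"
  by (simp only: cmul_cpow_xyyx_Suc cmul_xyyx_Cons)

definition antidiag_sum :: "'a::field \<Rightarrow> nat \<Rightarrow> (nat \<Rightarrow> nat \<Rightarrow> 'a) \<Rightarrow> 'a" where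
  "antidiag_sum p n F = (\<Sum>k\<le>n. p powi (int n - 2 * int k) * F k (n - k))"

lemma antidiag_sum_0 [simp]: "antidiag_sum p 0 F = F 0 0"
  by (simp add: antidiag_sum_def)

lemma antidiag_sum_zero [simp]: "antidiag_sum p n (\<lambda>i j. 0) = 0"
  by (simp add: antidiag_sum_def)

lemma antidiag_sum_add [simp]:
  "antidiag_sum p n (\<lambda>i j. F i j + H i j) = antidiag_sum p n F + antidiag_sum p n H"
  by (simp add: antidiag_sum_def distrib_left sum.distrib)

lemma antidiag_sum_scale [simp]: "antidiag_sum p n (\<lambda>i j. c * F i j) = c * antidiag_sum p n F"
  by (simp add: antidiag_sum_def sum_distrib_left mult.left_commute)

lemma antidiag_sum_transpose: "antidiag_sum p n F = antidiag_sum (inverse p) n (\<lambda>i j. F j i)"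
proof -
  have "antidiag_sum p n F = (\<Sum>k\<le>n. p powi (int n - 2 * int (n - k)) * F (n - k) k)"
    unfolding antidiag_sum_def
    by (rule sum.reindex_bij_witness[where i="\<lambda>k. n - k" and j="\<lambda>k. n - k"]) auto
  also have "\<dots> = antidiag_sum (inverse p) n (\<lambda>i j. F j i)"
    unfolding antidiag_sum_def
    by (intro sum.cong refl) (simp add: of_nat_diff power_int_inverse flip: power_int_minus)
  finally show ?thesis .
qed

lemma antidiag_sum_shift_left:
  assumes "p \<noteq> 0" and "F 0 (Suc m) = 0"
  shows "antidiag_sum p (Suc m) F = inverse p * antidiag_sum p m (\<lambda>i j. F (Suc i) j)"
proof -
  have "p powi (int (Suc m) - 2 * int (Suc k)) = inverse p * p powi (int m - 2 * int k)" for k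
    using assms(1) by (simp add: power_int_diff power_int_add field_simps)
  then show ?thesis
    using assms(2) unfolding antidiag_sum_def sum.atMost_Suc_shift
    by (simp add: sum_distrib_left mult.assoc)
qed

lemma antidiag_sum_shift_right:
  assumes "p \<noteq> 0" and "F (Suc m) 0 = 0"
  shows "antidiag_sum p (Suc m) F = p * antidiag_sum p m (\<lambda>i j. F i (Suc j))"
  using assms antidiag_sum_shift_left[of "inverse p" "\<lambda>i j. F j i" m]
  by (simp add: antidiag_sum_transpose[of p] antidiag_sum_transpose[of p m])

definition shuffle_conv ::
    "'a::field \<Rightarrow> 'a \<Rightarrow> nat \<Rightarrow> (nat \<Rightarrow> letter list) \<Rightarrow> (nat \<Rightarrow> letter list) \<Rightarrow> 'a vec" where
  "shuffle_conv q p n f g = (\<lambda>w. antidiag_sum p n (\<lambda>i j. wstar q (f i) (g j) w))"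

lemma sum_star_eq_shuffle_conv:
  "(\<lambda>w. \<Sum>k\<le>n. p powi (int n - 2 * int k) * star q (word (f k)) (word (g (n - k))) w)
     = shuffle_conv q p n f g"
  by (simp add: shuffle_conv_def antidiag_sum_def star_word)

lemma sum_star_rev_eq_shuffle_conv:
  "(\<lambda>w. \<Sum>k\<le>n. p powi (int n - 2 * int k) * star q (word (g (n - k))) (word (f k)) w)
     = shuffle_conv q (inverse p) n g f"
  unfolding shuffle_conv_def antidiag_sum_transpose[of "inverse p"]
  by (simp add: antidiag_sum_def star_word)

lemma shuffle_conv_0: "shuffle_conv q p 0 f g = wstar q (f 0) (g 0)"
  by (simp add: shuffle_conv_def)

lemma shuffle_conv_Nil:
  "shuffle_conv q p n f g [] = antidiag_sum p n (\<lambda>i j. if f i = [] \<and> g j = [] then 1 else 0)"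
  by (simp add: shuffle_conv_def wstar_Nil_Nil)

lemma shuffle_conv_Cons:
  "shuffle_conv q p n f g (c # w) =
     antidiag_sum p n (\<lambda>i j. prepend c (\<lambda>u. wstar q u (g j) w) (f i))
   + antidiag_sum p n (\<lambda>i j. q powi ip_word (f i) c * prepend c (\<lambda>v. wstar q (f i) v w) (g j))"
  by (simp add: shuffle_conv_def wstar_Cons)

context
  fixes q :: "'a::field" and a :: letter
  assumes q_nonzero: "q \<noteq> 0"
begin

lemmas shuffle_conv_Cons_simps =
  shuffle_conv_Cons alt_odd_eq_Cons antidiag_sum_shift_left antidiag_sum_shift_right
  q_nonzero power_int_minus power2_eq_square

lemma shuffle_conv_odd_even_Cons:
  "shuffle_conv q q n (alt_odd a) (alt_even (other a)) (a # w)
     = shuffle_conv q q n (alt_even (other a)) (alt_even (other a)) w"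
  "shuffle_conv q q (Suc m) (alt_odd a) (alt_even (other a)) (other a # w)
     = inverse q * shuffle_conv q q m (alt_odd a) (alt_odd a) w"
  by (simp_all add: shuffle_conv_Cons_simps) (simp_all add: shuffle_conv_def shuffle_conv_Cons_simps)

lemma shuffle_conv_even_odd_Cons:
  "shuffle_conv q q n (alt_even (other a)) (alt_odd a) (a # w)
     = shuffle_conv q q n (alt_even (other a)) (alt_even (other a)) w"
  "shuffle_conv q q (Suc m) (alt_even (other a)) (alt_odd a) (other a # w)
     = inverse q * shuffle_conv q q m (alt_odd a) (alt_odd a) w"
  by (simp_all add: shuffle_conv_Cons_simps) (simp_all add: shuffle_conv_def shuffle_conv_Cons_simps)

lemma shuffle_conv_even_even_Cons:
  "shuffle_conv q q n (alt_even (other a)) (alt_even (other a)) (a # w) = 0"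
  "shuffle_conv q q (Suc m) (alt_even (other a)) (alt_even (other a)) (other a # w)
     = inverse q * shuffle_conv q q m (alt_odd a) (alt_even (other a)) w
     + q * shuffle_conv q q m (alt_even (other a)) (alt_odd a) w"
  by (simp_all add: shuffle_conv_Cons_simps) (simp_all add: shuffle_conv_def shuffle_conv_Cons_simps)

lemma shuffle_conv_odd_odd_Cons:
  "shuffle_conv q q n (alt_odd a) (alt_odd a) (a # w)
     = shuffle_conv q q n (alt_even (other a)) (alt_odd a) w
     + q\<^sup>2 * shuffle_conv q q n (alt_odd a) (alt_even (other a)) w"
  "shuffle_conv q q n (alt_odd a) (alt_odd a) (other a # w) = 0"
  by (simp_all add: shuffle_conv_Cons_simps) (simp_all add: shuffle_conv_def shuffle_conv_Cons_simps)

lemma shuffle_conv_inv_even_odd_Cons: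
  "shuffle_conv q (inverse q) (Suc m) (alt_even a) (alt_odd a) (a # w)
     = shuffle_conv q (inverse q) (Suc m) (alt_even a) (alt_even (other a)) w
     + q * shuffle_conv q (inverse q) m (alt_odd (other a)) (alt_odd a) w"
  "shuffle_conv q (inverse q) n (alt_even a) (alt_odd a) (other a # w) = 0"
  by (simp_all add: shuffle_conv_Cons_simps) (simp_all add: shuffle_conv_def shuffle_conv_Cons_simps)

lemma shuffle_conv_inv_odd_even_Cons:
  "shuffle_conv q (inverse q) (Suc m) (alt_odd a) (alt_even a) (a # w)
     = shuffle_conv q (inverse q) (Suc m) (alt_even (other a)) (alt_even a) w
     + q * shuffle_conv q (inverse q) m (alt_odd a) (alt_odd (other a)) w"
  "shuffle_conv q (inverse q) n (alt_odd a) (alt_even a) (other a # w) = 0"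
  by (simp_all add: shuffle_conv_Cons_simps) (simp_all add: shuffle_conv_def shuffle_conv_Cons_simps)

lemma shuffle_conv_inv_even_even_Cons:
  "shuffle_conv q (inverse q) (Suc m) (alt_even a) (alt_even (other a)) (a # w)
     = q * shuffle_conv q (inverse q) m (alt_odd (other a)) (alt_even (other a)) w"
  "shuffle_conv q (inverse q) (Suc m) (alt_even a) (alt_even (other a)) (other a # w)
     = inverse q * shuffle_conv q (inverse q) m (alt_even a) (alt_odd a) w"
  by (simp_all add: shuffle_conv_Cons_simps) (simp_all add: shuffle_conv_def shuffle_conv_Cons_simps)

lemma shuffle_conv_inv_odd_odd_Cons:
  "shuffle_conv q (inverse q) m (alt_odd (other a)) (alt_odd a) (a # w)
     = inverse (q\<^sup>2) * shuffle_conv q (inverse q) m (alt_odd (other a)) (alt_even (other a)) w"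
  "shuffle_conv q (inverse q) m (alt_odd (other a)) (alt_odd a) (other a # w)
     = shuffle_conv q (inverse q) m (alt_even a) (alt_odd a) w"
  by (simp_all add: shuffle_conv_Cons_simps) (simp_all add: shuffle_conv_def shuffle_conv_Cons_simps)

end

lemma shuffle_conv_closed_forms:
  fixes q :: "'a::field" and a :: letter
  assumes q: "q \<noteq> 0"
  defines "c \<equiv> q + inverse q" and "P \<equiv> \<lambda>n. cmul (cpow xyyx n) (word [a])"
  shows "shuffle_conv q q n (alt_odd a) (alt_even (other a)) w = c ^ n * P n w
    \<and> shuffle_conv q q n (alt_even (other a)) (alt_odd a) w = c ^ n * P n w
    \<and> shuffle_conv q q (Suc n) (alt_even (other a)) (alt_even (other a)) w
        = c ^ Suc n * prepend (other a) (P n) w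
    \<and> shuffle_conv q q n (alt_odd a) (alt_odd a) w = q * c ^ Suc n * prepend a (P n) w"
proof (induction w arbitrary: n)
  case Nil
  show ?case
    using q by (simp add: shuffle_conv_Nil antidiag_sum_shift_left P_def)
next
  case (Cons b w)
  consider "b = a" | "b = other a"
    using letter_eq_or_other by blast
  then show ?case
  proof cases
    case 1
    have "x + q\<^sup>2 * x = q * c * x" for x
      using q by (simp add: c_def power2_eq_square algebra_simps)
    then show ?thesis
      using Cons.IH 1 q
      by (cases n) (simp_all add: shuffle_conv_odd_even_Cons shuffle_conv_even_odd_Cons
          shuffle_conv_even_even_Cons shuffle_conv_odd_odd_Cons shuffle_conv_0 wstar_Cons
          P_def mult.assoc)
  next
    case 2
    have "inverse q * x + q * x = c * x" for x
      by (simp add: c_def algebra_simps)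
    then show ?thesis
      using Cons.IH 2 q
      by (cases n) (simp_all add: shuffle_conv_odd_even_Cons shuffle_conv_even_odd_Cons
          shuffle_conv_even_even_Cons shuffle_conv_odd_odd_Cons shuffle_conv_0 wstar_Cons
          P_def mult.assoc)
  qed
qed

text \<open>The third sum is the coefficient of \<open>a w\<close> in the first one (for \<open>n + 1\<close>).\<close>

lemma shuffle_conv_inv_closed_forms:
  fixes q :: "'a::field" and a :: letter
  assumes q: "q \<noteq> 0"
  defines "c \<equiv> q + inverse q"
  shows "shuffle_conv q (inverse q) n (alt_even a) (alt_odd a) w = c ^ n * prepend a (cpow xyyx n) w
    \<and> shuffle_conv q (inverse q) n (alt_odd a) (alt_even a) w = c ^ n * prepend a (cpow xyyx n) w
    \<and> shuffle_conv q (inverse q) (Suc n) (alt_even a) (alt_even (other a)) w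
        + q * shuffle_conv q (inverse q) n (alt_odd (other a)) (alt_odd a) w
        = c ^ Suc n * cpow xyyx (Suc n) w"
proof (induction w arbitrary: a n)
  case Nil
  show ?case
    using q by (simp add: shuffle_conv_Nil antidiag_sum_shift_left)
next
  case (Cons b w)
  consider "b = a" | "b = other a"
    using letter_eq_or_other by blast
  then show ?case
  proof cases
    case 1
    have "q * x + q * (inverse (q\<^sup>2) * x) = c * x" for x
      using q by (simp add: c_def power2_eq_square algebra_simps)
    then show ?thesis
      using Cons.IH Cons.IH[where a = "other a", simplified] 1 q
      by (cases n) (simp_all add: shuffle_conv_inv_even_odd_Cons shuffle_conv_inv_odd_even_Cons
          shuffle_conv_inv_even_even_Cons shuffle_conv_inv_odd_odd_Cons shuffle_conv_0 wstar_Cons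
          power_int_minus word_Cons_eq_prepend mult.assoc)
  next
    case 2
    have "inverse q * x + q * x = c * x" for x
      by (simp add: c_def algebra_simps)
    then show ?thesis
      using Cons.IH 2 q
      by (cases n) (simp_all add: shuffle_conv_inv_even_odd_Cons shuffle_conv_inv_odd_even_Cons
          shuffle_conv_inv_even_even_Cons shuffle_conv_inv_odd_odd_Cons shuffle_conv_0 wstar_Cons
          word_Cons_eq_prepend mult.assoc)
  qed
qed

lemma power_int_neg_exponent_eq_inverse:
  "(q :: 'a::field) powi (2 * int k - int n) = inverse q powi (int n - 2 * int k)"
  by (simp add: power_int_inverse flip: power_int_minus)

lemma qint_2_eq:
  assumes "q \<noteq> 0" and "q\<^sup>2 \<noteq> 1"
  shows "qint q 2 = q + inverse q"
proof -
  have "q - inverse q \<noteq> 0"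
    using assms by (auto simp: power2_eq_square field_simps)
  moreover have "q\<^sup>2 - inverse q ^ 2 = (q - inverse q) * (q + inverse q)"
    by (simp add: power2_eq_square algebra_simps)
  ultimately show ?thesis
    by (simp add: qint_def)
qed

theorem proposition12p5:
  fixes q :: "'a::field" and n :: nat
  assumes "q \<noteq> 0" and "\<forall>m::nat. m > 0 \<longrightarrow> q ^ m \<noteq> 1"
  shows
   "(\<lambda>w. \<Sum>k\<le>n. q powi (2*int k - int n) * star q (word (G (n-k))) (word (Wneg k)) w)
      = (\<lambda>w. \<Sum>k\<le>n. q powi (int n - 2*int k) * star q (word (Wneg k)) (word (G (n-k))) w)
    \<and> (\<lambda>w. \<Sum>k\<le>n. q powi (int n - 2*int k) * star q (word (Wneg k)) (word (G (n-k))) w)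
      = smul (qint q 2 ^ n) (cmul (cpow xyyx n) (word [X]))
    \<and> (\<lambda>w. \<Sum>k\<le>n. q powi (int n - 2*int k) * star q (word (G (n-k))) (word (Wpos k)) w)
      = (\<lambda>w. \<Sum>k\<le>n. q powi (2*int k - int n) * star q (word (Wpos k)) (word (G (n-k))) w)
    \<and> (\<lambda>w. \<Sum>k\<le>n. q powi (2*int k - int n) * star q (word (Wpos k)) (word (G (n-k))) w)
      = smul (qint q 2 ^ n) (cmul (word [Y]) (cpow xyyx n))
    \<and> (\<lambda>w. \<Sum>k\<le>n. q powi (int n - 2*int k) * star q (word (Gt (n-k))) (word (Wneg k)) w)
      = (\<lambda>w. \<Sum>k\<le>n. q powi (2*int k - int n) * star q (word (Wneg k)) (word (Gt (n-k))) w)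
    \<and> (\<lambda>w. \<Sum>k\<le>n. q powi (2*int k - int n) * star q (word (Wneg k)) (word (Gt (n-k))) w)
      = smul (qint q 2 ^ n) (cmul (word [X]) (cpow xyyx n))
    \<and> (\<lambda>w. \<Sum>k\<le>n. q powi (2*int k - int n) * star q (word (Gt (n-k))) (word (Wpos k)) w)
      = (\<lambda>w. \<Sum>k\<le>n. q powi (int n - 2*int k) * star q (word (Wpos k)) (word (Gt (n-k))) w)
    \<and> (\<lambda>w. \<Sum>k\<le>n. q powi (int n - 2*int k) * star q (word (Wpos k)) (word (Gt (n-k))) w)
      = smul (qint q 2 ^ n) (cmul (cpow xyyx n) (word [Y]))"
proof -
  have q: "q \<noteq> 0" and qint: "qint q 2 = q + inverse q"
    using assms qint_2_eq[of q] by auto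
  note closed_forms = shuffle_conv_closed_forms[OF q] shuffle_conv_inv_closed_forms[OF q]
  show ?thesis
    unfolding power_int_neg_exponent_eq_inverse G_Gt_Wneg_Wpos_eq_alt inverse_inverse_eq
      sum_star_eq_shuffle_conv sum_star_rev_eq_shuffle_conv
    by (simp add: fun_eq_iff smul_def cmul_word_single qint
        closed_forms[where a = X, simplified] closed_forms[where a = Y, simplified])
qed

end
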